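(* For every $\alpha\in(0,1)$, neither $\overline{D}_\alpha^{\mathrm{test}}$ nor $\hat D_\alpha^{\mathrm{test}}$ is a quantum Rényi $\alpha$-divergence; that is, for each of these two functions (defined on $\bigcup_{d\in\mathbb N}\mathcal S(\mathbb C^d)\times\mathcal S(\mathbb C^d)$), it is not the case that it is both invariant under isometries and equal to the classical Rényi $\alpha$-divergence on every pair of commuting states.
   Context: $\mathcal S(\mathbb C^d)$ denotes the set of density operators on $\mathbb C^d$. A function $D^q_\alpha$ on $\bigcup_d\mathcal S(\mathbb C^d)\times\mathcal S(\mathbb C^d)$ is a quantum Rényi $\alpha$-divergence if $D_\alpha^q(V\varrho V^*\|V\sigma V^* )=D^q_\alpha(\varrho\|\sigma)$ for all isometries $V:\mathbb C^d\to\mathbb C^{d'}$, and whenever $\varrho=\sum_i p_i|i\rangle\langle i|$, $\sigma=\sum_i q_i|i\rangle\langle i|$ are diagonal in a common orthonormal basis, $D^q_\alpha(\varrho\|\sigma)=\frac{1}{\alpha-1}\log\sum_i p_i^\alpha q_i^{1-\alpha}$. A test is an operator $0\le T\le I$; $\mathcal T(X):=(\operatorname{Tr}XT,\operatorname{Tr}X(I-T))$; $D_\alpha^{\mathrm{test}}(\varrho\|\sigma):=\max_{0\le T\le I}D_\alpha(\mathcal T(\varrho)\|\mathcal T(\sigma))$ with $D_\alpha$ the classical Rényi divergence of the two-point distributions; $\overline{D}_\alpha^{\mathrm{test}}(\varrho\|\sigma):=\limsup_{n}\frac1n D_\alpha^{\mathrm{test}}(\varrho^{\otimes n}\|\sigma^{\otimes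 n})$ and $\hat D_\alpha^{\mathrm{test}}(\varrho\|\sigma):=\sup_{n}\frac1n D_\alpha^{\mathrm{test}}(\varrho^{\otimes n}\|\sigma^{\otimes n})$. *)

theory Defs
  imports "Jordan_Normal_Form.Schur_Decomposition" "HOL-Library.Extended_Real"
    "HOL-Library.Liminf_Limsup"
begin

definition mtrace :: "complex mat \<Rightarrow> complex" where
  "mtrace A = (\<Sum>i<dim_row A. A $$ (i, i))"

definition psd :: "nat \<Rightarrow> complex mat \<Rightarrow> bool" where
  "psd d A \<longleftrightarrow> A \<in> carrier_mat d d \<and>
     (\<forall>v \<in> carrier_vec d. Im (conjugate v \<bullet> (A *\<^sub>v v)) = 0 \<and> 0 \<le> Re (conjugate v \<bullet> (A *\<^sub>v v)))"

definition density :: "nat \<Rightarrow> complex mat \<Rightarrow> bool" where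
  "density d \<rho> \<longleftrightarrow> psd d \<rho> \<and> mtrace \<rho> = 1"

definition isometry :: "nat \<Rightarrow> nat \<Rightarrow> complex mat \<Rightarrow> bool" where
  "isometry d' d V \<longleftrightarrow> V \<in> carrier_mat d' d \<and> mat_adjoint V * V = 1\<^sub>m d"

definition unitary_mat :: "nat \<Rightarrow> complex mat \<Rightarrow> bool" where
  "unitary_mat d U \<longleftrightarrow> U \<in> carrier_mat d d \<and> mat_adjoint U * U = 1\<^sub>m d"

definition prob_vec :: "nat \<Rightarrow> (nat \<Rightarrow> real) \<Rightarrow> bool" where
  "prob_vec d p \<longleftrightarrow> (\<forall>i<d. 0 \<le> p i) \<and> (\<Sum>i<d. p i) = 1"

definition classical_renyi :: "real \<Rightarrow> nat \<Rightarrow> (nat \<Rightarrow> real) \<Rightarrow> (nat \<Rightarrow> real) \<Rightarrow> ereal" where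
  "classical_renyi \<alpha> n p q =
     (let s = (\<Sum>i<n. p i powr \<alpha> * q i powr (1 - \<alpha>))
      in if s = 0 then \<infinity> else ereal (ln s / (\<alpha> - 1)))"

text \<open>Quantum Renyi alpha-divergence: isometry invariance plus agreement with the classical
  divergence on pairs of states diagonal in a common orthonormal basis.\<close>
definition is_quantum_renyi :: "real \<Rightarrow> (complex mat \<Rightarrow> complex mat \<Rightarrow> ereal) \<Rightarrow> bool" where
  "is_quantum_renyi \<alpha> D \<longleftrightarrow>
     (\<forall>d d' V \<rho> \<sigma>. isometry d' d V \<and> density d \<rho> \<and> density d \<sigma> \<longrightarrow>
        D (V * \<rho> * mat_adjoint V) (V * \<sigma> * mat_adjoint V) = D \<rho> \<sigma>) \<and>
     (\<forall>d U p q. unitary_mat d U \<and> prob_vec d p \<and> prob_vec d q \<longrightarrow>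
        D (U * mat_diag d (\<lambda>i. complex_of_real (p i)) * mat_adjoint U)
          (U * mat_diag d (\<lambda>i. complex_of_real (q i)) * mat_adjoint U)
        = classical_renyi \<alpha> d p q)"

definition is_test :: "nat \<Rightarrow> complex mat \<Rightarrow> bool" where
  "is_test d T \<longleftrightarrow> psd d T \<and> psd d (1\<^sub>m d - T)"

definition two_point :: "real \<Rightarrow> real \<Rightarrow> nat \<Rightarrow> real" where
  "two_point a b = (\<lambda>i. if i = 0 then a else b)"

text \<open>Measured (test) Renyi divergence; the maximum over tests is written as a supremum.\<close>
definition D_test :: "real \<Rightarrow> complex mat \<Rightarrow> complex mat \<Rightarrow> ereal" where
  "D_test \<alpha> \<rho> \<sigma> =
     (SUP T \<in> {T. is_test (dim_row \<rho>) T}.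
        classical_renyi \<alpha> 2
          (two_point (Re (mtrace (\<rho> * T))) (Re (mtrace (\<rho> * (1\<^sub>m (dim_row \<rho>) - T)))))
          (two_point (Re (mtrace (\<sigma> * T))) (Re (mtrace (\<sigma> * (1\<^sub>m (dim_row \<rho>) - T))))))"

definition kron :: "complex mat \<Rightarrow> complex mat \<Rightarrow> complex mat" where
  "kron A B = mat (dim_row A * dim_row B) (dim_col A * dim_col B)
     (\<lambda>(i, j). A $$ (i div dim_row B, j div dim_col B) * B $$ (i mod dim_row B, j mod dim_col B))"

fun tpow :: "complex mat \<Rightarrow> nat \<Rightarrow> complex mat" where
  "tpow A 0 = 1\<^sub>m 1"
| "tpow A (Suc n) = kron (tpow A n) A"

definition D_bar :: "real \<Rightarrow> complex mat \<Rightarrow> complex mat \<Rightarrow> ereal" where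
  "D_bar \<alpha> \<rho> \<sigma> = limsup (\<lambda>n. D_test \<alpha> (tpow \<rho> n) (tpow \<sigma> n) / ereal (real n))"

definition D_hat :: "real \<Rightarrow> complex mat \<Rightarrow> complex mat \<Rightarrow> ereal" where
  "D_hat \<alpha> \<rho> \<sigma> = (SUP n \<in> {1..}. D_test \<alpha> (tpow \<rho> n) (tpow \<sigma> n) / ereal (real n))"

end

theory Submission
  imports Defs
begin

(* Take rho = diag(m, 1 - m, 0) and sigma = diag(m, 0, 1 - m). They overlap only in the first
   entry, so their classical divergence is -ln m / (1 - alpha). Their n-th tensor powers are again
   diagonal and share the entry u = m^n. If t is the first diagonal entry of a test T, both
   states give the outcome T probability at least u t and the outcome I - T probability at least
   u (1 - t); hence on one of the two outcomes both probabilities are at least u/2. Then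
   a^alpha b^(1-alpha) + (1-a)^alpha (1-b)^(1-alpha) >= (u/2)^g / 2 with g = max alpha (1 - alpha) < 1,
   so the test divergence of n copies is at most ((1 + g) ln 2 - g n ln m) / (1 - alpha). Divided
   by n, this stays strictly below -ln m / (1 - alpha) as soon as (1 + g) ln 2 < (1 - g) (-ln m). *)

abbreviation real_diag :: "nat \<Rightarrow> (nat \<Rightarrow> real) \<Rightarrow> complex mat" where
  "real_diag d p \<equiv> mat_diag d (\<lambda>i. complex_of_real (p i))"

lemma binary_overlap_ge:
  fixes p v a b :: real
  assumes "0 < p" "p < 1" "0 < v" "v \<le> a" "v \<le> b" "a \<le> 1" "b \<le> 1"
  shows "v powr max p (1 - p) / 2 \<le> a powr p * b powr (1 - p) + (1 - a) powr p * (1 - b) powr (1 - p)"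
proof -
  define g where "g = max p (1 - p)"
  have half: "1/2 \<le> x powr e" if "1/2 \<le> x" "x \<le> 1" "0 \<le> e" "e \<le> 1" for x e :: real
    using powr_mono_both'[of e 1 "1/2" x] that by simp
  have vg: "v powr g \<le> 1" using assms by (intro powr_le1) (auto simp: g_def)
  have nonneg: "0 \<le> a powr p * b powr (1 - p)" "0 \<le> (1 - a) powr p * (1 - b) powr (1 - p)"
    by simp_all
  consider (a_large) "1/2 \<le> a" | (b_large) "1/2 \<le> b" | (small) "1/2 \<le> 1 - a" "1/2 \<le> 1 - b"
    by linarith
  then show ?thesis
  proof cases
    case a_large
    have "1/2 * v powr g \<le> a powr p * b powr (1 - p)"
      using a_large assms by (intro mult_mono half powr_mono_both') (auto simp: g_def)
    then show ?thesis using nonneg unfolding g_def by linarith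
  next
    case b_large
    have "v powr g * (1/2) \<le> a powr p * b powr (1 - p)"
      using b_large assms by (intro mult_mono half powr_mono_both') (auto simp: g_def)
    then show ?thesis using nonneg unfolding g_def by linarith
  next
    case small
    have "1/2 = (1/2 :: real) powr p * (1/2) powr (1 - p)"
      using powr_add[of "1/2 :: real" p "1 - p"] by simp
    also have "\<dots> \<le> (1 - a) powr p * (1 - b) powr (1 - p)"
      using small assms by (intro mult_mono powr_mono2) auto
    finally show ?thesis using vg nonneg unfolding g_def by linarith
  qed
qed

lemma classical_renyi_eq:
  assumes "\<alpha> < 1" "0 < s" "(\<Sum>i<n. p i powr \<alpha> * q i powr (1 - \<alpha>)) = s"
  shows "classical_renyi \<alpha> n p q = ereal (- ln s / (1 - \<alpha>))"
  using assms by (simp add: classical_renyi_def field_simps)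

lemma classical_renyi_le:
  assumes "\<alpha> < 1" "0 < s" "s \<le> (\<Sum>i<n. p i powr \<alpha> * q i powr (1 - \<alpha>))"
  shows "classical_renyi \<alpha> n p q \<le> ereal (- ln s / (1 - \<alpha>))"
proof -
  define S where "S = (\<Sum>i<n. p i powr \<alpha> * q i powr (1 - \<alpha>))"
  have "classical_renyi \<alpha> n p q = ereal (- ln S / (1 - \<alpha>))"
    using assms by (intro classical_renyi_eq) (auto simp: S_def)
  also have "- ln S / (1 - \<alpha>) \<le> - ln s / (1 - \<alpha>)"
    using assms by (intro divide_right_mono) (auto simp: S_def)
  finally show ?thesis by simp
qed

lemma two_outcome_renyi_le:
  fixes \<alpha> v a b :: real
  assumes "0 < \<alpha>" "\<alpha> < 1" "0 < v" "0 \<le> a" "a \<le> 1" "0 \<le> b" "b \<le> 1"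
    and "v \<le> a \<and> v \<le> b \<or> v \<le> 1 - a \<and> v \<le> 1 - b"
  shows "classical_renyi \<alpha> 2 (two_point a (1 - a)) (two_point b (1 - b))
           \<le> ereal (- ln (v powr max \<alpha> (1 - \<alpha>) / 2) / (1 - \<alpha>))"
proof (rule classical_renyi_le)
  have "v powr max \<alpha> (1 - \<alpha>) / 2
          \<le> a powr \<alpha> * b powr (1 - \<alpha>) + (1 - a) powr \<alpha> * (1 - b) powr (1 - \<alpha>)"
    using assms binary_overlap_ge[of \<alpha> v "1 - a" "1 - b"] binary_overlap_ge[of \<alpha> v a b]
    by auto
  then show "v powr max \<alpha> (1 - \<alpha>) / 2
      \<le> (\<Sum>i<2. two_point a (1 - a) i powr \<alpha> * two_point b (1 - b) i powr (1 - \<alpha>))"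
    by (simp add: two_point_def numeral_2_eq_2)
qed (use assms in auto)

lemma dim_mat_diag [simp]: "dim_row (mat_diag n f) = n" "dim_col (mat_diag n f) = n"
  by (simp_all add: mat_diag_def)

lemma prob_vec_dim_pos: "prob_vec d p \<Longrightarrow> 0 < d"
  by (cases d) (auto simp: prob_vec_def)

lemma psd_diag_nonneg:
  assumes "psd N T" "i < N"
  shows "0 \<le> Re (T $$ (i, i))"
proof -
  have T: "T \<in> carrier_mat N N" using assms unfolding psd_def by simp
  have "conjugate (unit_vec N i) = (unit_vec N i :: complex vec)"
    using assms by (intro eq_vecI) auto
  then have "conjugate (unit_vec N i) \<bullet> (T *\<^sub>v unit_vec N i) = T $$ (i, i)"
    using T assms by simp
  moreover have "0 \<le> Re (conjugate (unit_vec N i) \<bullet> (T *\<^sub>v unit_vec N i))"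
    using assms unfolding psd_def by auto
  ultimately show ?thesis by simp
qed

lemma is_test_diag_bounds:
  assumes "is_test N T" "i < N"
  shows "0 \<le> Re (T $$ (i, i))" and "Re (T $$ (i, i)) \<le> 1"
  using psd_diag_nonneg[of N T i] psd_diag_nonneg[of N "1\<^sub>m N - T" i] assms
  by (auto simp: is_test_def psd_def)

lemma is_test_complement: "is_test N T \<Longrightarrow> is_test N (1\<^sub>m N - T)"
proof -
  assume T: "is_test N T"
  then have "1\<^sub>m N - (1\<^sub>m N - T) = T"
    by (intro eq_matI) (auto simp: is_test_def psd_def)
  then show ?thesis using T by (simp add: is_test_def)
qed

lemma mtrace_real_diag_mult:
  assumes "T \<in> carrier_mat N N"
  shows "Re (mtrace (real_diag N p * T)) = (\<Sum>i<N. p i * Re (T $$ (i, i)))"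
  using assms by (simp add: mat_diag_mult_left mtrace_def Re_sum)

lemma test_probs_sum:
  assumes "T \<in> carrier_mat N N" "prob_vec N P"
  shows "Re (mtrace (real_diag N P * (1\<^sub>m N - T))) = 1 - Re (mtrace (real_diag N P * T))"
proof -
  have "Re (mtrace (real_diag N P * (1\<^sub>m N - T))) = (\<Sum>i<N. P i * Re ((1\<^sub>m N - T) $$ (i, i)))"
    using assms by (intro mtrace_real_diag_mult) auto
  also have "\<dots> = (\<Sum>i<N. P i * (1 - Re (T $$ (i, i))))"
    using assms by (intro sum.cong) auto
  also have "\<dots> = 1 - Re (mtrace (real_diag N P * T))"
    using assms by (simp add: mtrace_real_diag_mult prob_vec_def algebra_simps sum_subtractf)
  finally show ?thesis .
qed

lemma test_prob_ge_diag:
  assumes T: "is_test N T" and P: "prob_vec N P" and "i < N"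
  shows "P i * Re (T $$ (i, i)) \<le> Re (mtrace (real_diag N P * T))"
    and "P i * (1 - Re (T $$ (i, i))) \<le> 1 - Re (mtrace (real_diag N P * T))"
proof -
  have ge: "P i * Re (S $$ (i, i)) \<le> Re (mtrace (real_diag N P * S))" if S: "is_test N S" for S
  proof -
    have "S \<in> carrier_mat N N" using S by (simp add: is_test_def psd_def)
    moreover have "0 \<le> P j * Re (S $$ (j, j))" if "j < N" for j
      using S P is_test_diag_bounds[OF S that] that by (simp add: prob_vec_def)
    ultimately show ?thesis
      using \<open>i < N\<close> member_le_sum[of i "{..<N}" "\<lambda>j. P j * Re (S $$ (j, j))"]
      by (simp add: mtrace_real_diag_mult)
  qed
  show "P i * Re (T $$ (i, i)) \<le> Re (mtrace (real_diag N P * T))" using ge[OF T] .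
  have "T \<in> carrier_mat N N" using T by (simp add: is_test_def psd_def)
  then show "P i * (1 - Re (T $$ (i, i))) \<le> 1 - Re (mtrace (real_diag N P * T))"
    using ge[OF is_test_complement[OF T]] \<open>i < N\<close> by (simp add: test_probs_sum[OF _ P])
qed

lemma test_renyi_real_diag_le:
  assumes \<alpha>: "0 < \<alpha>" "\<alpha> < 1" and T: "is_test N T"
    and P: "prob_vec N P" "P 0 = u" and Q: "prob_vec N Q" "Q 0 = u" and "0 < u"
  shows "classical_renyi \<alpha> 2
           (two_point (Re (mtrace (real_diag N P * T))) (Re (mtrace (real_diag N P * (1\<^sub>m N - T)))))
           (two_point (Re (mtrace (real_diag N Q * T))) (Re (mtrace (real_diag N Q * (1\<^sub>m N - T)))))
         \<le> ereal (((1 + max \<alpha> (1 - \<alpha>)) * ln 2 - max \<alpha> (1 - \<alpha>) * ln u) / (1 - \<alpha>))"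
proof -
  have "0 < N" using P by (simp add: prob_vec_dim_pos)
  have Tc: "T \<in> carrier_mat N N" using T by (simp add: is_test_def psd_def)
  define t where "t = Re (T $$ (0, 0))"
  define a where "a = Re (mtrace (real_diag N P * T))"
  define b where "b = Re (mtrace (real_diag N Q * T))"
  have a: "u * t \<le> a" "u * (1 - t) \<le> 1 - a"
    using test_prob_ge_diag[OF T P(1) \<open>0 < N\<close>] by (simp_all add: a_def t_def P(2))
  have b: "u * t \<le> b" "u * (1 - t) \<le> 1 - b"
    using test_prob_ge_diag[OF T Q(1) \<open>0 < N\<close>] by (simp_all add: b_def t_def Q(2))
  have "0 \<le> u * t" "0 \<le> u * (1 - t)"
    using is_test_diag_bounds[OF T \<open>0 < N\<close>] \<open>0 < u\<close> by (simp_all add: t_def)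
  have "u / 2 \<le> a \<and> u / 2 \<le> b \<or> u / 2 \<le> 1 - a \<and> u / 2 \<le> 1 - b"
  proof (cases "1/2 \<le> t")
    case True
    then have "u / 2 \<le> u * t" using \<open>0 < u\<close> by simp
    then show ?thesis using a b by linarith
  next
    case False
    then have "u / 2 \<le> u * (1 - t)" using \<open>0 < u\<close> by simp
    then show ?thesis using a b by linarith
  qed
  then have "classical_renyi \<alpha> 2 (two_point a (1 - a)) (two_point b (1 - b))
               \<le> ereal (- ln ((u / 2) powr max \<alpha> (1 - \<alpha>) / 2) / (1 - \<alpha>))"
    using \<alpha> \<open>0 < u\<close> a b \<open>0 \<le> u * t\<close> \<open>0 \<le> u * (1 - t)\<close>
    by (intro two_outcome_renyi_le) auto
  also have "- ln ((u / 2) powr max \<alpha> (1 - \<alpha>) / 2)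
               = (1 + max \<alpha> (1 - \<alpha>)) * ln 2 - max \<alpha> (1 - \<alpha>) * ln u"
    using \<open>0 < u\<close> by (simp add: ln_div algebra_simps)
  finally show ?thesis
    by (simp add: a_def b_def test_probs_sum[OF Tc P(1)] test_probs_sum[OF Tc Q(1)])
qed

lemma D_test_real_diag_le:
  assumes "0 < \<alpha>" "\<alpha> < 1" "prob_vec N P" "P 0 = u" "prob_vec N Q" "Q 0 = u" "0 < u"
  shows "D_test \<alpha> (real_diag N P) (real_diag N Q)
           \<le> ereal (((1 + max \<alpha> (1 - \<alpha>)) * ln 2 - max \<alpha> (1 - \<alpha>) * ln u) / (1 - \<alpha>))"
  unfolding D_test_def using assms by (intro SUP_least) (auto intro: test_renyi_real_diag_le)

lemma kron_mat_diag:
  assumes "0 < d"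
  shows "kron (mat_diag N f) (mat_diag d h) = mat_diag (N * d) (\<lambda>i. f (i div d) * h (i mod d))"
proof (rule eq_matI)
  fix i j
  assume "i < dim_row (mat_diag (N * d) (\<lambda>i. f (i div d) * h (i mod d)))"
    and "j < dim_col (mat_diag (N * d) (\<lambda>i. f (i div d) * h (i mod d)))"
  then have ij: "i < N * d" "j < N * d" by simp_all
  then have "i div d < N" "j div d < N" by (simp_all add: less_mult_imp_div_less)
  moreover have "i mod d < d" "j mod d < d" using assms by simp_all
  moreover have "(i div d = j div d \<and> i mod d = j mod d) = (i = j)"
    by (metis div_mult_mod_eq)
  ultimately show "kron (mat_diag N f) (mat_diag d h) $$ (i, j)
                     = mat_diag (N * d) (\<lambda>i. f (i div d) * h (i mod d)) $$ (i, j)"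
    using ij unfolding kron_def mat_diag_def by auto
qed (auto simp: kron_def mat_diag_def)

fun digit_prod :: "(nat \<Rightarrow> real) \<Rightarrow> nat \<Rightarrow> nat \<Rightarrow> nat \<Rightarrow> real" where
  "digit_prod f d 0 i = 1"
| "digit_prod f d (Suc n) i = digit_prod f d n (i div d) * f (i mod d)"

lemma tpow_real_diag: "0 < d \<Longrightarrow> tpow (real_diag d f) n = real_diag (d ^ n) (digit_prod f d n)"
proof (induction n)
  case 0
  show ?case by (rule eq_matI) (auto simp: mat_diag_def)
next
  case (Suc n)
  then show ?case using kron_mat_diag[of d "d ^ n"] by (simp add: mult.commute)
qed

lemma sum_div_mod_mult:
  fixes f h :: "nat \<Rightarrow> 'a :: semiring_0"
  assumes "0 < d"
  shows "(\<Sum>i<N * d. f (i div d) * h (i mod d)) = (\<Sum>i<N. f i) * (\<Sum>j<d. h j)"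
proof -
  have "(\<Sum>i<N * d. f (i div d) * h (i mod d))
          = (\<Sum>k<N. \<Sum>i\<in>{k * d..<k * d + d}. f (i div d) * h (i mod d))"
    by (rule sum.nat_group[symmetric])
  also have "\<dots> = (\<Sum>k<N. \<Sum>j<d. f k * h j)"
  proof (rule sum.cong[OF refl])
    fix k
    show "(\<Sum>i\<in>{k * d..<k * d + d}. f (i div d) * h (i mod d)) = (\<Sum>j<d. f k * h j)"
      using sum.shift_bounds_nat_ivl[of "\<lambda>i. f (i div d) * h (i mod d)" 0 "k * d" d] assms
      by (simp add: atLeast0LessThan add.commute)
  qed
  also have "\<dots> = (\<Sum>i<N. f i) * (\<Sum>j<d. h j)"
    by (simp add: sum_product)
  finally show ?thesis .
qed

lemma sum_digit_prod: "0 < d \<Longrightarrow> (\<Sum>i<d ^ n. digit_prod f d n i) = (\<Sum>j<d. f j) ^ n"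
proof (induction n)
  case (Suc n)
  then show ?case
    using sum_div_mod_mult[OF \<open>0 < d\<close>, where N = "d ^ n" and f = "digit_prod f d n" and h = f]
    by (simp add: mult.commute)
qed simp

lemma digit_prod_nonneg: "0 < d \<Longrightarrow> (\<And>j. j < d \<Longrightarrow> 0 \<le> f j) \<Longrightarrow> 0 \<le> digit_prod f d n i"
  by (induction n arbitrary: i) simp_all

lemma digit_prod_0: "digit_prod f d n 0 = f 0 ^ n"
  by (induction n) simp_all

lemma prob_vec_digit_prod:
  assumes "prob_vec d p"
  shows "prob_vec (d ^ n) (digit_prod p d n)"
proof -
  have "0 < d" using assms by (rule prob_vec_dim_pos)
  then show ?thesis
    using assms by (simp add: prob_vec_def sum_digit_prod digit_prod_nonneg)
qed

lemma D_test_tpow_le: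
  assumes \<alpha>: "0 < \<alpha>" "\<alpha> < 1" and "prob_vec d p" "prob_vec d q" "p 0 = m" "q 0 = m" "0 < m"
    and "1 \<le> n"
  shows "D_test \<alpha> (tpow (real_diag d p) n) (tpow (real_diag d q) n)
           \<le> ereal (real n * (((1 + max \<alpha> (1 - \<alpha>)) * ln 2 - max \<alpha> (1 - \<alpha>) * ln m) / (1 - \<alpha>)))"
proof -
  define g where "g = max \<alpha> (1 - \<alpha>)"
  have "0 < d" using assms by (simp add: prob_vec_dim_pos)
  have "D_test \<alpha> (tpow (real_diag d p) n) (tpow (real_diag d q) n)
          \<le> ereal (((1 + g) * ln 2 - g * ln (m ^ n)) / (1 - \<alpha>))"
    unfolding tpow_real_diag[OF \<open>0 < d\<close>] g_def
    using assms by (intro D_test_real_diag_le prob_vec_digit_prod) (auto simp: digit_prod_0)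
  also have "((1 + g) * ln 2 - g * ln (m ^ n)) / (1 - \<alpha>)
               \<le> real n * (((1 + g) * ln 2 - g * ln m) / (1 - \<alpha>))"
  proof -
    have "0 \<le> (1 + g) * ln 2" using \<alpha> by (simp add: g_def)
    then have "(1 + g) * ln 2 \<le> real n * ((1 + g) * ln 2)"
      using \<open>1 \<le> n\<close> mult_right_mono[of 1 "real n" "(1 + g) * ln 2"] by simp
    then have "(1 + g) * ln 2 - g * ln (m ^ n) \<le> real n * ((1 + g) * ln 2 - g * ln m)"
      by (simp add: ln_realpow algebra_simps)
    then show ?thesis
      using \<alpha> by (simp add: divide_right_mono)
  qed
  finally show ?thesis by (simp add: g_def)
qed

lemma regularized_D_test_le:
  assumes "\<And>n. 1 \<le> n \<Longrightarrow> D_test \<alpha> (tpow \<rho> n) (tpow \<sigma> n) \<le> ereal (real n * \<beta>)"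
  shows "D_bar \<alpha> \<rho> \<sigma> \<le> ereal \<beta>" and "D_hat \<alpha> \<rho> \<sigma> \<le> ereal \<beta>"
proof -
  have per_copy: "D_test \<alpha> (tpow \<rho> n) (tpow \<sigma> n) / ereal (real n) \<le> ereal \<beta>" if "1 \<le> n" for n
  proof -
    have "D_test \<alpha> (tpow \<rho> n) (tpow \<sigma> n) / ereal (real n) \<le> ereal (real n * \<beta>) / ereal (real n)"
      using assms that by (intro ereal_divide_right_mono) auto
    also have "\<dots> = ereal \<beta>" using that by simp
    finally show ?thesis .
  qed
  show "D_bar \<alpha> \<rho> \<sigma> \<le> ereal \<beta>"
    unfolding D_bar_def by (intro Limsup_bounded eventually_sequentiallyI[of 1] per_copy)
  show "D_hat \<alpha> \<rho> \<sigma> \<le> ereal \<beta>"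
    unfolding D_hat_def by (intro SUP_least) (auto intro: per_copy)
qed

lemma regularized_D_test_real_diag_le:
  assumes "0 < \<alpha>" "\<alpha> < 1" "prob_vec d p" "prob_vec d q" "p 0 = m" "q 0 = m" "0 < m"
  shows "D_bar \<alpha> (real_diag d p) (real_diag d q)
           \<le> ereal (((1 + max \<alpha> (1 - \<alpha>)) * ln 2 - max \<alpha> (1 - \<alpha>) * ln m) / (1 - \<alpha>))"
    and "D_hat \<alpha> (real_diag d p) (real_diag d q)
           \<le> ereal (((1 + max \<alpha> (1 - \<alpha>)) * ln 2 - max \<alpha> (1 - \<alpha>) * ln m) / (1 - \<alpha>))"
  using D_test_tpow_le[OF assms] by (intro regularized_D_test_le; simp)+

lemma mat_adjoint_one: "mat_adjoint (1\<^sub>m n :: complex mat) = 1\<^sub>m n"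
  by (rule eq_matI) (auto simp: mat_adjoint_def mat_of_rows_def)

lemma not_quantum_renyi_if_diag_neq:
  assumes "prob_vec d p" "prob_vec d q"
    and "D (real_diag d p) (real_diag d q) \<noteq> classical_renyi \<alpha> d p q"
  shows "\<not> is_quantum_renyi \<alpha> D"
proof
  assume "is_quantum_renyi \<alpha> D"
  moreover have "unitary_mat d (1\<^sub>m d)" by (simp add: unitary_mat_def mat_adjoint_one)
  ultimately have "D (1\<^sub>m d * real_diag d p * mat_adjoint (1\<^sub>m d))
                     (1\<^sub>m d * real_diag d q * mat_adjoint (1\<^sub>m d)) = classical_renyi \<alpha> d p q"
    using assms unfolding is_quantum_renyi_def by blast
  then show False
    using assms(3) by (simp add: mat_adjoint_one)
qed

theorem mainTheorem4:
  fixes \<alpha> :: real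
  assumes "0 < \<alpha>" and "\<alpha> < 1"
  shows "\<not> is_quantum_renyi \<alpha> (D_bar \<alpha>) \<and> \<not> is_quantum_renyi \<alpha> (D_hat \<alpha>)"
proof -
  define g where "g = max \<alpha> (1 - \<alpha>)"
  define m where "m = exp (- 2 * ln 2 / (1 - g))"
  define p where "p = (\<lambda>i::nat. if i = 0 then m else if i = 1 then 1 - m else 0)"
  define q where "q = (\<lambda>i::nat. if i = 0 then m else if i = 2 then 1 - m else 0)"
  have "g < 1" using assms by (simp add: g_def)
  then have m: "0 < m" "m < 1" by (auto simp: m_def)
  then have pq: "prob_vec 3 p" "prob_vec 3 q"
    by (auto simp: prob_vec_def p_def q_def numeral_3_eq_3)
  have "classical_renyi \<alpha> 3 p q = ereal (- ln m / (1 - \<alpha>))"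
    using assms m powr_add[of m \<alpha> "1 - \<alpha>"]
    by (intro classical_renyi_eq) (auto simp: p_def q_def numeral_3_eq_3)
  moreover have "((1 + g) * ln 2 - g * ln m) / (1 - \<alpha>) < - ln m / (1 - \<alpha>)"
  proof -
    have "(1 + g) * ln 2 < (1 - g) * (- ln m)" using \<open>g < 1\<close> by (simp add: m_def)
    then show ?thesis using assms by (intro divide_strict_right_mono) (auto simp: algebra_simps)
  qed
  ultimately have "D_bar \<alpha> (real_diag 3 p) (real_diag 3 q) < classical_renyi \<alpha> 3 p q"
    and "D_hat \<alpha> (real_diag 3 p) (real_diag 3 q) < classical_renyi \<alpha> 3 p q"
    using regularized_D_test_real_diag_le[OF assms pq] m
    by (auto simp: g_def p_def q_def intro: order.strict_trans1)
  then show ?thesis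
    using not_quantum_renyi_if_diag_neq[OF pq] less_imp_neq by blast
qed

end
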